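(* Let $\Omega\subset\mathbb{R}^2$ be open, $\lambda>0$, and let $u\in L^2(\Omega)$ satisfy $-\Delta u=\lambda u$ in $\Omega$. Let $\mathbf{x}_0\in\Omega$, $h>0$, and let $\mathbf{e}^-,\mathbf{e}^+$ be unit vectors with angle $\alpha\pi$ from $\mathbf{e}^-$ to $\mathbf{e}^+$, where $\alpha\in(0,2)$ is irrational; put $\Gamma^\pm=\{\mathbf{x}_0+t\mathbf{e}^\pm:0\le t\le h\}\subset\Omega$. Suppose $\Gamma^-$ is a generalized singular line of $u$ with constant parameter $\eta_1\equiv C_1$ and $\Gamma^+$ is a nodal line of $u$ ($u=0$ on $\Gamma^+$). Then $\mathrm{Vani}(u;\mathbf{x}_0)=+\infty$.
   Context: No boundary condition is imposed on $\partial\Omega$; $u$ is real-analytic in $\Omega$. A generalized singular line with parameter $\eta$ (not identically zero; here a nonzero complex constant) is a segment $\Gamma$ on which $\partial_\nu u+\eta u=0$, $\nu$ a unit normal to $\Gamma$. $\mathrm{Vani}(u;\mathbf{x}_0)$ is the smallest degree of a nonzero homogeneous term in the Taylor expansion of $u$ at $\mathbf{x}_0$ ($+\infty$ if all vanish). *)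

theory Defs
  imports "HOL-Analysis.Analysis" "HOL-Library.Extended_Nat"
begin

definition pdx :: "(real \<times> real \<Rightarrow> complex) \<Rightarrow> real \<times> real \<Rightarrow> complex" where
  "pdx f p = vector_derivative (\<lambda>t. f (t, snd p)) (at (fst p))"

definition pdy :: "(real \<times> real \<Rightarrow> complex) \<Rightarrow> real \<times> real \<Rightarrow> complex" where
  "pdy f p = vector_derivative (\<lambda>t. f (fst p, t)) (at (snd p))"

text \<open>Iterated partial derivatives: True = d/dx, False = d/dy (applied right to left).\<close>
fun dops :: "bool list \<Rightarrow> (real \<times> real \<Rightarrow> complex) \<Rightarrow> real \<times> real \<Rightarrow> complex" where
  "dops [] f = f"
| "dops (b # bs) f = (if b then pdx else pdy) (dops bs f)"

definition smooth2_on :: "(real \<times> real) set \<Rightarrow> (real \<times> real \<Rightarrow> complex) \<Rightarrow> bool" where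
  "smooth2_on \<Omega> u \<longleftrightarrow> (\<forall>bs. continuous_on \<Omega> (dops bs u) \<and>
     (\<forall>p\<in>\<Omega>. (\<lambda>t. dops bs u (t, snd p)) differentiable (at (fst p)) \<and>
              (\<lambda>t. dops bs u (fst p, t)) differentiable (at (snd p))))"

definition laplacian :: "(real \<times> real \<Rightarrow> complex) \<Rightarrow> real \<times> real \<Rightarrow> complex" where
  "laplacian u p = pdx (pdx u) p + pdy (pdy u) p"

text \<open>Homogeneous term of degree N of the Taylor expansion of u at x0
  (as a function of the displacement (x,y)).\<close>
definition taylor_hterm :: "(real \<times> real \<Rightarrow> complex) \<Rightarrow> real \<times> real \<Rightarrow> nat \<Rightarrow> real \<times> real \<Rightarrow> complex" where
  "taylor_hterm u x0 N = (\<lambda>(x, y). \<Sum>j\<le>N.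
      dops (replicate j True @ replicate (N - j) False) u x0
        / of_real (fact j * fact (N - j)) * of_real (x ^ j * y ^ (N - j)))"

definition Vani :: "(real \<times> real \<Rightarrow> complex) \<Rightarrow> real \<times> real \<Rightarrow> enat" where
  "Vani u x0 = (if \<exists>N. taylor_hterm u x0 N \<noteq> (\<lambda>_. 0)
                then enat (LEAST N. taylor_hterm u x0 N \<noteq> (\<lambda>_. 0)) else \<infinity>)"

definition rot90 :: "real \<times> real \<Rightarrow> real \<times> real" where
  "rot90 e = (- snd e, fst e)"

definition rotate :: "real \<Rightarrow> real \<times> real \<Rightarrow> real \<times> real" where
  "rotate \<theta> e = (cos \<theta> * fst e - sin \<theta> * snd e, sin \<theta> * fst e + cos \<theta> * snd e)"

definition segment_from :: "real \<times> real \<Rightarrow> real \<times> real \<Rightarrow> real \<Rightarrow> (real \<times> real) set" where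
  "segment_from x0 e h = {x0 + t *\<^sub>R e | t. 0 \<le> t \<and> t \<le> h}"

definition normal_deriv :: "real \<times> real \<Rightarrow> (real \<times> real \<Rightarrow> complex) \<Rightarrow> real \<times> real \<Rightarrow> complex" where
  "normal_deriv \<nu> u p = of_real (fst \<nu>) * pdx u p + of_real (snd \<nu>) * pdy u p"

definition gen_singular_line ::
  "(real \<times> real \<Rightarrow> complex) \<Rightarrow> (real \<times> real) set \<Rightarrow> real \<times> real \<Rightarrow> (real \<times> real \<Rightarrow> complex) \<Rightarrow> bool" where
  "gen_singular_line u \<Gamma> \<nu> \<eta> \<longleftrightarrow> (\<forall>p\<in>\<Gamma>. normal_deriv \<nu> u p + \<eta> p * u p = 0)"

end

theory Submission
  imports Defs
begin

text \<open>Suppose all derivatives of u of order below N vanish at x0. Differentiating the Helmholtz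
  equation then gives d_x^(k+2) d_y^m u (x0) = - d_x^k d_y^(m+2) u (x0) in order N, so all derivatives
  of order N are determined by A = d_x^N u (x0) and B = d_x^(N-1) d_y u (x0): the N-th derivative
  along a direction z (a complex number) is A Re (z^N) + B Im (z^N). The nodal line makes this
  vanish for z = e+ = cis (alpha pi) e-. On the singular line the (N-1)-th tangential derivative of
  d_nu u + C1 u vanishes; the term C1 u only involves derivatives of order N - 1, so this says that
  the same form vanishes at i e-^N. Both conditions together force A = B = 0 because
  cos (N alpha pi) is never 0 for irrational alpha, and induction on N gives Vani u x0 = \<infinity>.\<close>

section \<open>Calculus in the plane\<close>

lemma increment_linearization:
  fixes f f' :: "real \<Rightarrow> 'a::real_normed_vector"
  assumes s: "0 \<le> s"
    and f': "\<And>x. x \<in> {c..c+s} \<Longrightarrow> (f has_vector_derivative f' x) (at x)"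
    and near: "\<And>x. x \<in> {c..c+s} \<Longrightarrow> norm (f' x - L) \<le> \<epsilon>"
  shows "norm (f (c+s) - f c - s *\<^sub>R L) \<le> 3 * \<epsilon> * s"
proof -
  have c: "c \<in> {c..c+s}" using s by simp
  have near_c: "norm (L - f' c) \<le> \<epsilon>" using near[OF c] by (simp add: norm_minus_commute)
  have "norm (f (c+s) - f c - ((c+s) - c) *\<^sub>R f' c) \<le> norm ((c+s) - c) * (2 * \<epsilon>)"
  proof (rule vector_differentiable_bound_linearization[where S="{c..c+s}"])
    show "(f has_vector_derivative f' x) (at x within {c..c+s})" if "x \<in> {c..c+s}" for x
      using f'[OF that] by (rule has_vector_derivative_at_within)
    show "norm (f' x - f' c) \<le> 2 * \<epsilon>" if "x \<in> {c..c+s}" for x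
      using norm_diff_triangle_le[OF near[OF that] near_c] by simp
  qed (use s in \<open>auto simp: closed_segment_eq_real_ivl\<close>)
  then have "norm (f (c+s) - f c - s *\<^sub>R f' c) \<le> 2 * \<epsilon> * s"
    using s by (simp add: mult.commute)
  moreover have "norm (s *\<^sub>R f' c - s *\<^sub>R L) \<le> \<epsilon> * s"
    using near[OF c] s by (simp flip: scaleR_diff_right) (metis mult.commute mult_left_mono)
  ultimately show ?thesis
    using norm_diff_triangle_le by fastforce
qed

lemma second_difference_approx:
  fixes g gx gxy :: "real \<Rightarrow> real \<Rightarrow> 'a::real_normed_vector"
  assumes s: "0 \<le> s"
    and gx: "\<And>x y. x \<in> {a..a+s} \<Longrightarrow> y \<in> {b..b+s} \<Longrightarrow> ((\<lambda>t. g t y) has_vector_derivative gx x y) (at x)"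
    and gxy: "\<And>x y. x \<in> {a..a+s} \<Longrightarrow> y \<in> {b..b+s} \<Longrightarrow> ((\<lambda>t. gx x t) has_vector_derivative gxy x y) (at y)"
    and near: "\<And>x y. x \<in> {a..a+s} \<Longrightarrow> y \<in> {b..b+s} \<Longrightarrow> norm (gxy x y - gxy a b) \<le> \<epsilon>"
  shows "norm (g (a+s) (b+s) - g (a+s) b - g a (b+s) + g a b - (s * s) *\<^sub>R gxy a b) \<le> 9 * \<epsilon> * (s * s)"
proof -
  have ends: "b \<in> {b..b+s}" "b + s \<in> {b..b+s}" using s by auto
  have "norm ((g (a+s) (b+s) - g (a+s) b) - (g a (b+s) - g a b) - s *\<^sub>R (s *\<^sub>R gxy a b))
      \<le> 3 * (3 * \<epsilon> * s) * s"
  proof (rule increment_linearization[OF s])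
    fix x assume x: "x \<in> {a..a+s}"
    show "((\<lambda>x. g x (b+s) - g x b) has_vector_derivative gx x (b+s) - gx x b) (at x)"
      using ends by (intro has_vector_derivative_diff gx x)
    show "norm (gx x (b+s) - gx x b - s *\<^sub>R gxy a b) \<le> 3 * \<epsilon> * s"
      by (rule increment_linearization[OF s]) (use gxy near x in auto)
  qed
  then show ?thesis by (simp add: algebra_simps)
qed

lemma dist_Pair_le_sum_abs: "dist (x, y) (a, b) \<le> \<bar>x - a\<bar> + \<bar>y - (b::real)\<bar>"
  unfolding dist_Pair_Pair dist_real_def power2_abs by (rule sqrt_sum_squares_le_sum_abs)

lemma mixed_partials_close:
  fixes G Gx Gy Gxy Gyx :: "real \<times> real \<Rightarrow> 'a::real_normed_vector"
  assumes s: "0 < s"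
    and Gx: "\<And>x y. x \<in> {a..a+s} \<Longrightarrow> y \<in> {b..b+s} \<Longrightarrow> ((\<lambda>t. G (t, y)) has_vector_derivative Gx (x, y)) (at x)"
    and Gy: "\<And>x y. x \<in> {a..a+s} \<Longrightarrow> y \<in> {b..b+s} \<Longrightarrow> ((\<lambda>t. G (x, t)) has_vector_derivative Gy (x, y)) (at y)"
    and Gxy: "\<And>x y. x \<in> {a..a+s} \<Longrightarrow> y \<in> {b..b+s} \<Longrightarrow> ((\<lambda>t. Gx (x, t)) has_vector_derivative Gxy (x, y)) (at y)"
    and Gyx: "\<And>x y. x \<in> {a..a+s} \<Longrightarrow> y \<in> {b..b+s} \<Longrightarrow> ((\<lambda>t. Gy (t, y)) has_vector_derivative Gyx (x, y)) (at x)"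
    and near: "\<And>x y. x \<in> {a..a+s} \<Longrightarrow> y \<in> {b..b+s} \<Longrightarrow>
      norm (Gxy (x, y) - Gxy (a, b)) \<le> \<epsilon> \<and> norm (Gyx (x, y) - Gyx (a, b)) \<le> \<epsilon>"
  shows "norm (Gxy (a, b) - Gyx (a, b)) \<le> 18 * \<epsilon>"
proof -
  let ?D = "G (a+s, b+s) - G (a+s, b) - G (a, b+s) + G (a, b)"
  have xy: "norm (?D - (s * s) *\<^sub>R Gxy (a, b)) \<le> 9 * \<epsilon> * (s * s)"
    using second_difference_approx[of s a b "\<lambda>x y. G (x, y)" "\<lambda>x y. Gx (x, y)" "\<lambda>x y. Gxy (x, y)" \<epsilon>]
      Gx Gxy near s by auto
  have "norm (G (a+s, b+s) - G (a, b+s) - G (a+s, b) + G (a, b) - (s * s) *\<^sub>R Gyx (a, b)) \<le> 9 * \<epsilon> * (s * s)"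
    using second_difference_approx[of s b a "\<lambda>x y. G (y, x)" "\<lambda>x y. Gy (y, x)" "\<lambda>x y. Gyx (y, x)" \<epsilon>]
      Gy Gyx near s by auto
  then have yx: "norm (?D - (s * s) *\<^sub>R Gyx (a, b)) \<le> 9 * \<epsilon> * (s * s)"
    by (simp add: algebra_simps)
  have "(s * s) * norm (Gxy (a, b) - Gyx (a, b)) = norm ((s * s) *\<^sub>R Gxy (a, b) - (s * s) *\<^sub>R Gyx (a, b))"
    using s by (simp flip: scaleR_diff_right)
  also have "\<dots> \<le> 9 * \<epsilon> * (s * s) + 9 * \<epsilon> * (s * s)"
    using xy by (intro norm_diff_triangle_le[OF _ yx]) (simp add: norm_minus_commute)
  finally show ?thesis using s by (simp add: algebra_simps)
qed

lemma mixed_partials_commute: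
  fixes G Gx Gy Gxy Gyx :: "real \<times> real \<Rightarrow> 'a::real_normed_vector"
  assumes "open \<Omega>" "p \<in> \<Omega>"
    and Gx: "\<And>q. q \<in> \<Omega> \<Longrightarrow> ((\<lambda>t. G (t, snd q)) has_vector_derivative Gx q) (at (fst q))"
    and Gy: "\<And>q. q \<in> \<Omega> \<Longrightarrow> ((\<lambda>t. G (fst q, t)) has_vector_derivative Gy q) (at (snd q))"
    and Gxy: "\<And>q. q \<in> \<Omega> \<Longrightarrow> ((\<lambda>t. Gx (fst q, t)) has_vector_derivative Gxy q) (at (snd q))"
    and Gyx: "\<And>q. q \<in> \<Omega> \<Longrightarrow> ((\<lambda>t. Gy (t, snd q)) has_vector_derivative Gyx q) (at (fst q))"
    and "continuous_on \<Omega> Gxy" "continuous_on \<Omega> Gyx"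
  shows "Gxy p = Gyx p"
proof -
  obtain a b where p: "p = (a, b)" by fastforce
  have bound: "norm (Gxy p - Gyx p) \<le> 18 * \<epsilon>" if "\<epsilon> > 0" for \<epsilon>
  proof -
    have "\<forall>\<^sub>F q in nhds p. dist (F q) (F p) < \<epsilon>" if "continuous_on \<Omega> F" for F :: "_ \<Rightarrow> 'a"
    proof -
      have "\<forall>\<^sub>F q in at p. dist (F q) (F p) < \<epsilon>"
        using that assms(1,2) \<open>\<epsilon> > 0\<close> by (simp add: continuous_on_eq_continuous_at isCont_def tendsto_iff)
      then show ?thesis
        unfolding eventually_at_filter by (rule eventually_mono) (use \<open>\<epsilon> > 0\<close> in auto)
    qed
    then have "\<forall>\<^sub>F q in nhds p. q \<in> \<Omega> \<and> dist (Gxy q) (Gxy p) < \<epsilon> \<and> dist (Gyx q) (Gyx p) < \<epsilon>"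
      using eventually_nhds_in_open[OF assms(1,2)] assms(7,8) by (simp add: eventually_conj_iff)
    then obtain r where "r > 0"
      and r: "\<And>q. dist q p < r \<Longrightarrow> q \<in> \<Omega> \<and> dist (Gxy q) (Gxy p) < \<epsilon> \<and> dist (Gyx q) (Gyx p) < \<epsilon>"
      unfolding eventually_nhds_metric by blast
    have box: "(x, y) \<in> \<Omega> \<and> norm (Gxy (x, y) - Gxy p) \<le> \<epsilon> \<and> norm (Gyx (x, y) - Gyx p) \<le> \<epsilon>"
      if "x \<in> {a..a + r/3}" "y \<in> {b..b + r/3}" for x y
    proof -
      have "dist (x, y) p \<le> \<bar>x - a\<bar> + \<bar>y - b\<bar>" using p dist_Pair_le_sum_abs by simp
      also have "\<dots> < r" using that \<open>r > 0\<close> by auto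
      finally show ?thesis using r[of "(x, y)"] by (simp add: dist_norm)
    qed
    show ?thesis
      unfolding p
    proof (rule mixed_partials_close[where s = "r/3"])
      fix x y assume xy: "x \<in> {a..a + r/3}" "y \<in> {b..b + r/3}"
      then have q: "(x, y) \<in> \<Omega>" using box by blast
      show "((\<lambda>t. G (t, y)) has_vector_derivative Gx (x, y)) (at x)" using Gx[OF q] by simp
      show "((\<lambda>t. G (x, t)) has_vector_derivative Gy (x, y)) (at y)" using Gy[OF q] by simp
      show "((\<lambda>t. Gx (x, t)) has_vector_derivative Gxy (x, y)) (at y)" using Gxy[OF q] by simp
      show "((\<lambda>t. Gy (t, y)) has_vector_derivative Gyx (x, y)) (at x)" using Gyx[OF q] by simp
      show "norm (Gxy (x, y) - Gxy (a, b)) \<le> \<epsilon> \<and> norm (Gyx (x, y) - Gyx (a, b)) \<le> \<epsilon>"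
        using box[OF xy] p by simp
    qed (use \<open>r > 0\<close> in simp)
  qed
  have "norm (Gxy p - Gyx p) \<le> 0 + \<epsilon>" if "\<epsilon> > 0" for \<epsilon>
    using bound[of "\<epsilon> / 18"] that by simp
  then have "norm (Gxy p - Gyx p) \<le> 0" by (rule field_le_epsilon)
  then show ?thesis by simp
qed

lemma has_derivative_of_partials:
  fixes G Gy :: "real \<times> real \<Rightarrow> 'a::banach"
  assumes "open \<Omega>" "p \<in> \<Omega>"
    and Gx: "((\<lambda>t. G (t, snd p)) has_vector_derivative Gx) (at (fst p))"
    and Gy: "\<And>q. q \<in> \<Omega> \<Longrightarrow> ((\<lambda>t. G (fst q, t)) has_vector_derivative Gy q) (at (snd q))"
    and "continuous_on \<Omega> Gy"
  shows "(G has_derivative (\<lambda>v. fst v *\<^sub>R Gx + snd v *\<^sub>R Gy p)) (at p)"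
proof -
  obtain a b where p: "p = (a, b)" by fastforce
  obtain r where "r > 0" and r: "ball p r \<subseteq> \<Omega>" using assms(1,2) open_contains_ball by blast
  define S where "S = ball a (r/2) \<times> ball b (r/2)"
  have "S \<subseteq> \<Omega>"
  proof
    fix q assume "q \<in> S"
    then obtain x y where q: "q = (x, y)" "\<bar>x - a\<bar> < r/2" "\<bar>y - b\<bar> < r/2"
      by (auto simp: S_def dist_real_def abs_minus_commute)
    have "dist q p \<le> \<bar>x - a\<bar> + \<bar>y - b\<bar>" using q p dist_Pair_le_sum_abs by simp
    then show "q \<in> \<Omega>" using q r by (auto simp: dist_commute)
  qed
  have "open S" "p \<in> S" using \<open>r > 0\<close> p by (auto simp: S_def open_Times)
  have "((\<lambda>(x, y). G (x, y)) has_derivative (\<lambda>(tx, ty). tx *\<^sub>R Gx + blinfun_scaleR_left (Gy (a, b)) ty))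
          (at (a, b) within ball a (r/2) \<times> ball b (r/2))"
  proof (rule has_derivative_partialsI[where fy="\<lambda>x y. blinfun_scaleR_left (Gy (x, y))"])
    show "((\<lambda>x. G (x, b)) has_derivative (\<lambda>tx. tx *\<^sub>R Gx)) (at a within ball a (r/2))"
      using Gx p unfolding has_vector_derivative_def by (auto intro: has_derivative_at_withinI)
    fix x y assume "x \<in> ball a (r/2)" "y \<in> ball b (r/2)"
    then have "(x, y) \<in> \<Omega>" using \<open>S \<subseteq> \<Omega>\<close> by (auto simp: S_def)
    then show "((\<lambda>y. G (x, y)) has_derivative blinfun_scaleR_left (Gy (x, y))) (at y within ball b (r/2))"
      using Gy[of "(x, y)"] unfolding has_vector_derivative_eq_has_derivative_blinfun[symmetric]
      by (auto intro: has_vector_derivative_at_within)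
  next
    have "isCont Gy (a, b)" using assms p by (simp add: continuous_on_eq_continuous_at)
    then show "continuous (at (a, b) within ball a (r/2) \<times> ball b (r/2)) (\<lambda>(x, y). blinfun_scaleR_left (Gy (x, y)))"
      by (simp add: case_prod_beta' continuous_at_imp_continuous_within
          bounded_linear.continuous[OF bounded_linear_blinfun_scaleR_left])
  qed (use \<open>r > 0\<close> in auto)
  then show ?thesis
    using at_within_open[OF \<open>p \<in> S\<close> \<open>open S\<close>] p by (simp add: S_def case_prod_beta')
qed

lemma has_vector_derivative_along_line:
  fixes G :: "real \<times> real \<Rightarrow> complex"
  assumes "(G has_derivative (\<lambda>v. fst v *\<^sub>R Gx + snd v *\<^sub>R Gy)) (at (x0 + t *\<^sub>R e))"
  shows "((\<lambda>t. G (x0 + t *\<^sub>R e)) has_vector_derivative of_real (fst e) * Gx + of_real (snd e) * Gy) (at t)"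
proof -
  have "((\<lambda>t. x0 + t *\<^sub>R e) has_derivative (\<lambda>h. h *\<^sub>R e)) (at t)"
    by (auto intro!: derivative_eq_intros)
  from has_derivative_compose[OF this assms]
  show ?thesis
    unfolding has_vector_derivative_def by (simp add: scaleR_conv_of_real algebra_simps)
qed

section \<open>Iterated partial derivatives\<close>

lemma open_slices:
  assumes "open \<Omega>"
  shows "open {t. (t, y) \<in> \<Omega>}" "open {t. (x, t) \<in> \<Omega>}"
proof -
  have "{t. (t, y) \<in> \<Omega>} = (\<lambda>t. (t, y)) -` \<Omega>" "{t. (x, t) \<in> \<Omega>} = (\<lambda>t. (x, t)) -` \<Omega>" by auto
  then show "open {t. (t, y) \<in> \<Omega>}" "open {t. (x, t) \<in> \<Omega>}"
    using assms by (auto intro!: continuous_open_vimage continuous_intros)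
qed

lemma pdx_cong_open:
  assumes "open \<Omega>" "p \<in> \<Omega>" "\<And>q. q \<in> \<Omega> \<Longrightarrow> f q = g q"
  shows "pdx f p = pdx g p"
  unfolding pdx_def
proof (rule vector_derivative_cong_eq)
  have "\<forall>\<^sub>F t in nhds (fst p). t \<in> {t. (t, snd p) \<in> \<Omega>}"
    using assms(2) by (intro eventually_nhds_in_open open_slices(1)[OF assms(1)]) simp
  then show "\<forall>\<^sub>F t in nhds (fst p). t \<in> UNIV \<longrightarrow> f (t, snd p) = g (t, snd p)"
    by (rule eventually_mono) (simp add: assms(3))
qed auto

lemma pdy_cong_open:
  assumes "open \<Omega>" "p \<in> \<Omega>" "\<And>q. q \<in> \<Omega> \<Longrightarrow> f q = g q"
  shows "pdy f p = pdy g p"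
  unfolding pdy_def
proof (rule vector_derivative_cong_eq)
  have "\<forall>\<^sub>F t in nhds (snd p). t \<in> {t. (fst p, t) \<in> \<Omega>}"
    using assms(2) by (intro eventually_nhds_in_open open_slices(2)[OF assms(1)]) simp
  then show "\<forall>\<^sub>F t in nhds (snd p). t \<in> UNIV \<longrightarrow> f (fst p, t) = g (fst p, t)"
    by (rule eventually_mono) (simp add: assms(3))
qed auto

lemma dops_cong_open:
  assumes "open \<Omega>" "\<And>q. q \<in> \<Omega> \<Longrightarrow> f q = g q" "p \<in> \<Omega>"
  shows "dops bs f p = dops bs g p"
  using assms(3)
proof (induction bs arbitrary: p)
  case (Cons b bs)
  then show ?case
    using pdx_cong_open[OF assms(1) Cons.prems Cons.IH] pdy_cong_open[OF assms(1) Cons.prems Cons.IH] by simp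
qed (use assms(2) in simp)

lemma dops_zero: "dops bs (\<lambda>_. 0) p = 0"
proof (induction bs arbitrary: p)
  case (Cons b bs)
  then show ?case by (simp add: pdx_def pdy_def)
qed simp

lemma dops_append: "dops (bs @ cs) f = dops bs (dops cs f)"
  by (induction bs) auto

lemma smooth2_on_has_vector_derivative_x:
  assumes "smooth2_on \<Omega> u" "q \<in> \<Omega>"
  shows "((\<lambda>t. dops bs u (t, snd q)) has_vector_derivative dops (True # bs) u q) (at (fst q))"
  using assms unfolding smooth2_on_def by (simp add: pdx_def vector_derivative_works[symmetric])

lemma smooth2_on_has_vector_derivative_y:
  assumes "smooth2_on \<Omega> u" "q \<in> \<Omega>"
  shows "((\<lambda>t. dops bs u (fst q, t)) has_vector_derivative dops (False # bs) u q) (at (snd q))"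
  using assms unfolding smooth2_on_def by (simp add: pdy_def vector_derivative_works[symmetric])

lemma smooth2_on_continuous_on: "smooth2_on \<Omega> u \<Longrightarrow> continuous_on \<Omega> (dops bs u)"
  unfolding smooth2_on_def by blast

lemma smooth2_on_dops: "smooth2_on \<Omega> u \<Longrightarrow> smooth2_on \<Omega> (dops cs u)"
  unfolding smooth2_on_def by (metis dops_append)

lemma smooth2_on_has_derivative:
  assumes "open \<Omega>" "smooth2_on \<Omega> u" "p \<in> \<Omega>"
  shows "(dops bs u has_derivative (\<lambda>v. fst v *\<^sub>R dops (True # bs) u p + snd v *\<^sub>R dops (False # bs) u p)) (at p)"
  using assms
  by (intro has_derivative_of_partials smooth2_on_has_vector_derivative_x smooth2_on_has_vector_derivative_y
      smooth2_on_continuous_on)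

lemma smooth2_on_has_vector_derivative_line:
  assumes "open \<Omega>" "smooth2_on \<Omega> u" "x0 + t *\<^sub>R e \<in> \<Omega>"
  shows "((\<lambda>t. dops bs u (x0 + t *\<^sub>R e)) has_vector_derivative
     of_real (fst e) * dops (True # bs) u (x0 + t *\<^sub>R e) + of_real (snd e) * dops (False # bs) u (x0 + t *\<^sub>R e)) (at t)"
  by (rule has_vector_derivative_along_line[OF smooth2_on_has_derivative[OF assms]])

lemma smooth2_on_dops_swap:
  assumes "open \<Omega>" "smooth2_on \<Omega> u" "p \<in> \<Omega>"
  shows "dops (False # True # bs) u p = dops (True # False # bs) u p"
  using assms
  by (intro mixed_partials_commute[where G = "dops bs u" and Gx = "dops (True # bs) u" and Gy = "dops (False # bs) u"]
      smooth2_on_has_vector_derivative_x smooth2_on_has_vector_derivative_y smooth2_on_continuous_on)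

lemma dops_lincomb:
  assumes "open \<Omega>" "smooth2_on \<Omega> f" "smooth2_on \<Omega> g" "smooth2_on \<Omega> k" "p \<in> \<Omega>"
  shows "dops bs (\<lambda>q. a * f q + b * g q + c * k q) p = a * dops bs f p + b * dops bs g p + c * dops bs k p"
  using assms(5)
proof (induction bs arbitrary: p)
  case (Cons d bs)
  let ?l = "\<lambda>bs q. a * dops bs f q + b * dops bs g q + c * dops bs k q"
  have "((\<lambda>t. ?l bs (t, snd p)) has_vector_derivative ?l (True # bs) p) (at (fst p))"
    using assms(2-4) Cons.prems
    by (intro has_vector_derivative_add has_vector_derivative_mult_right smooth2_on_has_vector_derivative_x)
  moreover have "((\<lambda>t. ?l bs (fst p, t)) has_vector_derivative ?l (False # bs) p) (at (snd p))"
    using assms(2-4) Cons.prems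
    by (intro has_vector_derivative_add has_vector_derivative_mult_right smooth2_on_has_vector_derivative_y)
  ultimately have "pdx (?l bs) p = ?l (True # bs) p" "pdy (?l bs) p = ?l (False # bs) p"
    by (simp_all add: pdx_def pdy_def vector_derivative_at)
  then show ?case
    using pdx_cong_open[OF assms(1) Cons.prems Cons.IH] pdy_cong_open[OF assms(1) Cons.prems Cons.IH] by simp
qed simp

lemma smooth2_on_lincomb:
  assumes "open \<Omega>" "smooth2_on \<Omega> f" "smooth2_on \<Omega> g" "smooth2_on \<Omega> k"
  shows "smooth2_on \<Omega> (\<lambda>q. a * f q + b * g q + c * k q)"
  unfolding smooth2_on_def
proof (intro allI conjI ballI)
  fix bs
  let ?h = "\<lambda>q. a * f q + b * g q + c * k q"
  let ?l = "\<lambda>bs q. a * dops bs f q + b * dops bs g q + c * dops bs k q"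
  have eq: "dops bs ?h q = ?l bs q" if "q \<in> \<Omega>" for bs q
    by (rule dops_lincomb[OF assms that])
  show "continuous_on \<Omega> (dops bs ?h)"
    using assms by (subst continuous_on_cong[OF refl eq]) (auto intro!: continuous_intros smooth2_on_continuous_on)
  fix p assume p: "p \<in> \<Omega>"
  have "((\<lambda>t. dops bs ?h (t, snd p)) has_vector_derivative ?l (True # bs) p) (at (fst p))"
  proof (rule has_vector_derivative_transform_within_open[OF _ open_slices(1)[OF assms(1), of "snd p"]])
    show "((\<lambda>t. ?l bs (t, snd p)) has_vector_derivative ?l (True # bs) p) (at (fst p))"
      using assms(2-4) p
      by (intro has_vector_derivative_add has_vector_derivative_mult_right smooth2_on_has_vector_derivative_x)
  qed (use p eq[symmetric] in auto)
  then show "(\<lambda>t. dops bs ?h (t, snd p)) differentiable at (fst p)"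
    using differentiableI_vector by blast
  have "((\<lambda>t. dops bs ?h (fst p, t)) has_vector_derivative ?l (False # bs) p) (at (snd p))"
  proof (rule has_vector_derivative_transform_within_open[OF _ open_slices(2)[OF assms(1), of "fst p"]])
    show "((\<lambda>t. ?l bs (fst p, t)) has_vector_derivative ?l (False # bs) p) (at (snd p))"
      using assms(2-4) p
      by (intro has_vector_derivative_add has_vector_derivative_mult_right smooth2_on_has_vector_derivative_y)
  qed (use p eq[symmetric] in auto)
  then show "(\<lambda>t. dops bs ?h (fst p, t)) differentiable at (snd p)"
    using differentiableI_vector by blast
qed

definition mixed_deriv :: "(real \<times> real \<Rightarrow> complex) \<Rightarrow> nat \<Rightarrow> nat \<Rightarrow> real \<times> real \<Rightarrow> complex" where
  "mixed_deriv u k m = dops (replicate k True @ replicate m False) u"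

lemma dops_False_mixed_deriv:
  assumes "open \<Omega>" "smooth2_on \<Omega> u" "p \<in> \<Omega>"
  shows "dops (False # replicate k True @ replicate m False) u p = mixed_deriv u k (Suc m) p"
  using assms(3)
proof (induction k arbitrary: p)
  case (Suc k)
  have "dops (False # replicate (Suc k) True @ replicate m False) u p
      = pdx (dops (False # replicate k True @ replicate m False) u) p"
    using smooth2_on_dops_swap[OF assms(1,2) Suc.prems] by simp
  also have "\<dots> = pdx (mixed_deriv u k (Suc m)) p"
    by (rule pdx_cong_open[OF assms(1) Suc.prems Suc.IH])
  finally show ?case by (simp add: mixed_deriv_def)
qed (simp add: mixed_deriv_def)

lemma dops_eq_mixed_deriv:
  assumes "open \<Omega>" "smooth2_on \<Omega> u" "p \<in> \<Omega>"
  shows "dops w u p = mixed_deriv u (length (filter id w)) (length (filter Not w)) p"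
  using assms(3)
proof (induction w arbitrary: p)
  case (Cons b w)
  show ?case
  proof (cases b)
    case True
    then show ?thesis
      using pdx_cong_open[OF assms(1) Cons.prems Cons.IH] by (simp add: mixed_deriv_def)
  next
    case False
    then show ?thesis
      using pdy_cong_open[OF assms(1) Cons.prems Cons.IH] dops_False_mixed_deriv[OF assms(1,2) Cons.prems]
      by (simp add: mixed_deriv_def)
  qed
qed (simp add: mixed_deriv_def)

lemma helmholtz_mixed_deriv:
  assumes "open \<Omega>" "smooth2_on \<Omega> u" "\<forall>q\<in>\<Omega>. - laplacian u q = of_real lam * u q" "p \<in> \<Omega>"
  shows "mixed_deriv u (k+2) m p + mixed_deriv u k (m+2) p + of_real lam * mixed_deriv u k m p = 0"
proof -
  let ?bs = "replicate k True @ replicate m False"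
  let ?v = "\<lambda>q. 1 * dops [True, True] u q + 1 * dops [False, False] u q + of_real lam * dops [] u q"
  have "?v q = 0" if "q \<in> \<Omega>" for q
    using assms(3) that by (simp add: laplacian_def add_eq_0_iff)
  then have "dops ?bs ?v p = 0"
    using dops_cong_open[OF assms(1) _ assms(4), of ?v "\<lambda>_. 0"] by (simp add: dops_zero)
  moreover have "dops ?bs ?v p = 1 * dops ?bs (dops [True, True] u) p + 1 * dops ?bs (dops [False, False] u) p
      + of_real lam * dops ?bs (dops [] u) p"
    using assms(2) by (intro dops_lincomb[OF assms(1) _ _ _ assms(4)] smooth2_on_dops)
  ultimately have "dops (?bs @ [True, True]) u p + dops (?bs @ [False, False]) u p + of_real lam * dops ?bs u p = 0"
    by (simp add: dops_append)
  moreover have "dops (?bs @ [True, True]) u p = mixed_deriv u (k+2) m p"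
    using dops_eq_mixed_deriv[OF assms(1,2,4), of "?bs @ [True, True]"] by simp
  moreover have "dops (?bs @ [False, False]) u p = mixed_deriv u k (m+2) p"
    using dops_eq_mixed_deriv[OF assms(1,2,4), of "?bs @ [False, False]"] by simp
  ultimately show ?thesis by (simp add: mixed_deriv_def)
qed

section \<open>Directional derivatives along a segment\<close>

definition words :: "nat \<Rightarrow> bool list set" where
  "words k = {w. length w = k}"

definition dir_coeff :: "real \<times> real \<Rightarrow> bool list \<Rightarrow> complex" where
  "dir_coeff e w = (\<Prod>b\<leftarrow>w. of_real (if b then fst e else snd e))"

text \<open>The chain rule expansion of the k-th derivative of t \<mapsto> u (p + t e) at t = 0.\<close>
definition dir_deriv :: "real \<times> real \<Rightarrow> nat \<Rightarrow> (real \<times> real \<Rightarrow> complex) \<Rightarrow> real \<times> real \<Rightarrow> complex" where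
  "dir_deriv e k u p = (\<Sum>w\<in>words k. dir_coeff e w * dops w u p)"

lemma finite_words: "finite (words k)"
  using finite_lists_length_eq[of "UNIV :: bool set" k] by (simp add: words_def)

lemma words_0: "words 0 = {[]}"
  by (auto simp: words_def)

lemma sum_words_Suc:
  "(\<Sum>w\<in>words (Suc k). f w) = (\<Sum>w\<in>words k. f (True # w)) + (\<Sum>w\<in>words k. f (False # w))"
proof -
  have "words (Suc k) = (Cons True) ` words k \<union> (Cons False) ` words k"
    by (auto simp: words_def length_Suc_conv)
  then have "(\<Sum>w\<in>words (Suc k). f w) = (\<Sum>w\<in>(Cons True) ` words k. f w) + (\<Sum>w\<in>(Cons False) ` words k. f w)"
    by (simp, intro sum.union_disjoint) (auto simp: finite_words)
  then show ?thesis by (simp add: sum.reindex)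
qed

lemma dir_deriv_Suc:
  "dir_deriv e (Suc k) u p
     = (\<Sum>w\<in>words k. dir_coeff e w * (of_real (fst e) * dops (True # w) u p + of_real (snd e) * dops (False # w) u p))"
  unfolding dir_deriv_def sum_words_Suc by (simp add: dir_coeff_def algebra_simps sum.distrib)

lemma has_vector_derivative_dir_deriv:
  assumes "open \<Omega>" "smooth2_on \<Omega> u" "x0 + t *\<^sub>R e \<in> \<Omega>"
  shows "((\<lambda>t. dir_deriv e k u (x0 + t *\<^sub>R e)) has_vector_derivative dir_deriv e (Suc k) u (x0 + t *\<^sub>R e)) (at t)"
  unfolding dir_deriv_Suc unfolding dir_deriv_def
  by (intro has_vector_derivative_sum has_vector_derivative_mult_right smooth2_on_has_vector_derivative_line[OF assms])

lemma dir_deriv_eq_0_if_vanishes_on_segment: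
  assumes "open \<Omega>" "smooth2_on \<Omega> u" "h > 0"
    and "segment_from x0 e h \<subseteq> \<Omega>" "\<forall>p\<in>segment_from x0 e h. u p = 0"
  shows "dir_deriv e k u x0 = 0"
proof -
  define F where "F k t = dir_deriv e k u (x0 + t *\<^sub>R e)" for k t
  have on_segment: "x0 + t *\<^sub>R e \<in> segment_from x0 e h" if "t \<in> {0..h}" for t
    using that by (auto simp: segment_from_def)
  have F': "(F k has_vector_derivative F (Suc k) t) (at t)" if "t \<in> {0..h}" for k t
    unfolding F_def using on_segment[OF that] assms(4)
    by (intro has_vector_derivative_dir_deriv[OF assms(1,2)]) blast
  have "\<forall>t\<in>{0<..<h}. F k t = 0"
  proof (induction k)
    case 0
    then show ?case using assms(5) on_segment by (simp add: F_def dir_deriv_def words_0 dir_coeff_def)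
  next
    case (Suc k)
    show ?case
    proof
      fix t assume t: "t \<in> {0<..<h}"
      have "((\<lambda>_. 0) has_vector_derivative F (Suc k) t) (at t)"
        by (rule has_vector_derivative_transform_within_open[OF F'[of t k], of "{0<..<h}"])
           (use t Suc.IH in auto)
      then show "F (Suc k) t = 0"
        using vector_derivative_unique_at[OF _ has_vector_derivative_const] by blast
    qed
  qed
  then have "(F k \<longlongrightarrow> 0) (at_right 0)"
    by (intro tendsto_eventually eventually_mono[OF eventually_at_right_real[OF assms(3)]]) simp
  moreover have "(F k \<longlongrightarrow> F k 0) (at_right 0)"
    using has_vector_derivative_continuous[OF F'[of 0 k]] assms(3) by (simp add: continuous_at filterlim_at_split)
  ultimately have "F k 0 = 0"
    using tendsto_unique[OF trivial_limit_at_right_real] by blast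
  then show ?thesis by (simp add: F_def)
qed

section \<open>Derivatives of top order at the corner\<close>

definition real_linear_map :: "complex \<Rightarrow> complex \<Rightarrow> complex \<Rightarrow> complex" where
  "real_linear_map A B z = A * of_real (Re z) + B * of_real (Im z)"

lemma real_linear_map_of_real_mult: "real_linear_map A B (of_real r * z) = of_real r * real_linear_map A B z"
  by (simp add: real_linear_map_def algebra_simps)

lemma real_linear_map_add: "real_linear_map A B (z + z') = real_linear_map A B z + real_linear_map A B z'"
  by (simp add: real_linear_map_def algebra_simps)

lemma real_linear_map_sum:
  "finite S \<Longrightarrow> real_linear_map A B (\<Sum>x\<in>S. f x) = (\<Sum>x\<in>S. real_linear_map A B (f x))"
  by (simp add: real_linear_map_def sum_distrib_left sum.distrib)

lemma real_linear_map_coeffs_eq_0: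
  assumes "\<zeta> \<noteq> 0" "real_linear_map A B (\<i> * \<zeta>) = 0" "real_linear_map A B (cis \<phi> * \<zeta>) = 0" "cos \<phi> \<noteq> 0"
  shows "A = 0 \<and> B = 0"
proof -
  have "cis \<phi> * \<zeta> = of_real (cos \<phi>) * \<zeta> + of_real (sin \<phi>) * (\<i> * \<zeta>)"
    by (simp add: cis.ctr Complex_eq algebra_simps)
  then have "of_real (cos \<phi>) * real_linear_map A B \<zeta> = 0"
    using assms(2,3) by (simp add: real_linear_map_add real_linear_map_of_real_mult)
  then have "real_linear_map A B \<zeta> = 0" using assms(4) by simp
  then have e1: "A * of_real (Re \<zeta>) + B * of_real (Im \<zeta>) = 0"
    and e2: "- A * of_real (Im \<zeta>) + B * of_real (Re \<zeta>) = 0"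
    using assms(2) by (simp_all add: real_linear_map_def)
  have nz: "of_real ((Re \<zeta>)\<^sup>2 + (Im \<zeta>)\<^sup>2) \<noteq> (0::complex)"
    using assms(1) by (simp add: complex_eq_iff)
  have "A * of_real ((Re \<zeta>)\<^sup>2 + (Im \<zeta>)\<^sup>2) = of_real (Re \<zeta>) * (A * of_real (Re \<zeta>) + B * of_real (Im \<zeta>))
      - of_real (Im \<zeta>) * (- A * of_real (Im \<zeta>) + B * of_real (Re \<zeta>))"
    "B * of_real ((Re \<zeta>)\<^sup>2 + (Im \<zeta>)\<^sup>2) = of_real (Im \<zeta>) * (A * of_real (Re \<zeta>) + B * of_real (Im \<zeta>))
      + of_real (Re \<zeta>) * (- A * of_real (Im \<zeta>) + B * of_real (Re \<zeta>))"
    by (simp_all add: algebra_simps power2_eq_square)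
  then show ?thesis using e1 e2 nz by simp
qed

lemma sum_words_prod_list:
  fixes f :: "bool \<Rightarrow> 'a::comm_semiring_1"
  shows "(\<Sum>w\<in>words n. \<Prod>b\<leftarrow>w. f b) = (f True + f False) ^ n"
proof (induction n)
  case (Suc n)
  have "(\<Sum>w\<in>words n. \<Prod>b'\<leftarrow>b # w. f b') = f b * (\<Sum>w\<in>words n. \<Prod>b'\<leftarrow>w. f b')" for b
    by (simp add: sum_distrib_left)
  then show ?case by (simp add: sum_words_Suc Suc.IH algebra_simps)
qed (simp add: words_0)

lemma dir_coeff_of_real: "dir_coeff e w = of_real (\<Prod>b\<leftarrow>w. if b then fst e else snd e)"
  by (induction w) (auto simp: dir_coeff_def)

lemma dir_coeff_mult_power_i:
  "dir_coeff e w * \<i> ^ length (filter Not w) = (\<Prod>b\<leftarrow>w. if b then of_real (fst e) else \<i> * of_real (snd e))"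
  by (induction w) (auto simp: dir_coeff_def algebra_simps)

lemma sum_dir_coeff_real_linear_map:
  "(\<Sum>w\<in>words n. dir_coeff e w * real_linear_map A B (\<i> ^ length (filter Not w) * q))
     = real_linear_map A B (Complex (fst e) (snd e) ^ n * q)"
proof -
  have "(\<Sum>w\<in>words n. dir_coeff e w * real_linear_map A B (\<i> ^ length (filter Not w) * q))
      = real_linear_map A B ((\<Sum>w\<in>words n. dir_coeff e w * \<i> ^ length (filter Not w)) * q)"
    by (simp add: real_linear_map_sum finite_words sum_distrib_right dir_coeff_of_real
        flip: real_linear_map_of_real_mult mult.assoc)
  also have "\<dots> = real_linear_map A B (Complex (fst e) (snd e) ^ n * q)"
    by (simp add: dir_coeff_mult_power_i sum_words_prod_list Complex_eq)
  finally show ?thesis .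
qed

lemma cos_irrational_multiple_pi_ne_0:
  assumes "\<alpha> \<notin> \<rat>"
  shows "cos (real N * (\<alpha> * pi)) \<noteq> 0"
proof
  assume "cos (real N * (\<alpha> * pi)) = 0"
  then obtain x :: int where "real N * (\<alpha> * pi) = of_int x * pi + pi / 2"
    by (auto simp: cos_zero_iff_int2)
  then have "(real N * \<alpha> * 2) * pi = of_int (2 * x + 1) * pi"
    by (simp add: algebra_simps)
  then have odd: "real N * \<alpha> * 2 = of_int (2 * x + 1)" by simp
  have "N \<noteq> 0"
  proof
    assume "N = 0"
    then have "2 * x + 1 = 0" using odd by simp
    then show False by presburger
  qed
  then have "\<alpha> = of_int (2 * x + 1) / of_nat (2 * N)"
    using odd by (simp add: field_simps)
  then show False using assms by (simp add: Rats_divide)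
qed

lemma Complex_rotate: "Complex (fst (rotate \<theta> e)) (snd (rotate \<theta> e)) = cis \<theta> * Complex (fst e) (snd e)"
  by (simp add: rotate_def complex_eq_iff)

lemma Complex_rot90: "Complex (fst (rot90 e)) (snd (rot90 e)) = \<i> * Complex (fst e) (snd e)"
  by (simp add: rot90_def complex_eq_iff)

lemma start_in_segment: "h \<ge> 0 \<Longrightarrow> x0 \<in> segment_from x0 e h"
  unfolding segment_from_def by force

lemma helmholtz_top_order_derivatives:
  assumes "open \<Omega>" "smooth2_on \<Omega> u" "\<forall>q\<in>\<Omega>. - laplacian u q = of_real lam * u q" "x0 \<in> \<Omega>"
    and lower: "\<And>w. length w < N \<Longrightarrow> dops w u x0 = 0"
    and "length w = N"
  shows "dops w u x0
    = real_linear_map (mixed_deriv u N 0 x0) (mixed_deriv u (N-1) 1 x0) (\<i> ^ length (filter Not w))"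
proof -
  let ?L = "real_linear_map (mixed_deriv u N 0 x0) (mixed_deriv u (N-1) 1 x0)"
  have column: "mixed_deriv u (N-j) j x0 = ?L (\<i> ^ j)" if "j \<le> N" for j
    using that
  proof (induction j rule: less_induct)
    case (less j)
    consider "j = 0" | "j = 1" | i where "j = i + 2"
      by (metis add_2_eq_Suc' One_nat_def nat.exhaust)
    then show ?case
    proof cases
      case 3
      have "mixed_deriv u (N-j+2) i x0 + mixed_deriv u (N-j) (i+2) x0 + of_real lam * mixed_deriv u (N-j) i x0 = 0"
        by (rule helmholtz_mixed_deriv[OF assms(1-4)])
      moreover have "mixed_deriv u (N-j) i x0 = 0"
        unfolding mixed_deriv_def using 3 less.prems by (intro lower) simp
      moreover have "N - j + 2 = N - i" using 3 less.prems by simp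
      ultimately have "mixed_deriv u (N-j) j x0 = - mixed_deriv u (N-i) i x0"
        using 3 by (simp add: add_eq_0_iff)
      also have "\<dots> = ?L (\<i> ^ j)"
        using less.IH[of i] 3 less.prems by (simp add: real_linear_map_def power_add)
      finally show ?thesis .
    qed (simp_all add: real_linear_map_def)
  qed
  have "length (filter id w) = N - length (filter Not w)"
    using sum_length_filter_compl[of id w] \<open>length w = N\<close> by simp
  moreover have "length (filter Not w) \<le> N"
    using length_filter_le[of Not w] \<open>length w = N\<close> by simp
  ultimately show ?thesis
    using dops_eq_mixed_deriv[OF assms(1,2,4), of w] column[of "length (filter Not w)"] by simp
qed

lemma nodal_line_top_order:
  assumes "open \<Omega>" "smooth2_on \<Omega> u" "h > 0" "segment_from x0 e h \<subseteq> \<Omega>"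
    and "\<forall>p\<in>segment_from x0 e h. u p = 0"
    and top: "\<And>w. length w = N \<Longrightarrow> dops w u x0 = real_linear_map A B (\<i> ^ length (filter Not w))"
  shows "real_linear_map A B (Complex (fst e) (snd e) ^ N) = 0"
proof -
  have "real_linear_map A B (Complex (fst e) (snd e) ^ N * 1) = dir_deriv e N u x0"
    unfolding dir_deriv_def sum_dir_coeff_real_linear_map[symmetric]
    by (intro sum.cong) (simp_all add: words_def top)
  also have "\<dots> = 0" by (rule dir_deriv_eq_0_if_vanishes_on_segment[OF assms(1-5)])
  finally show ?thesis by simp
qed

lemma singular_line_top_order:
  assumes "open \<Omega>" "smooth2_on \<Omega> u" "h > 0" "segment_from x0 e h \<subseteq> \<Omega>"
    and "gen_singular_line u (segment_from x0 e h) (rot90 e) (\<lambda>_. C)" and "N > 0"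
    and lower: "\<And>w. length w < N \<Longrightarrow> dops w u x0 = 0"
    and top: "\<And>w. length w = N \<Longrightarrow> dops w u x0 = real_linear_map A B (\<i> ^ length (filter Not w))"
  shows "real_linear_map A B (\<i> * Complex (fst e) (snd e) ^ N) = 0"
proof -
  let ?\<nu> = "rot90 e"
  define g where "g q = of_real (fst ?\<nu>) * pdx u q + of_real (snd ?\<nu>) * pdy u q + C * u q" for q
  have "x0 \<in> \<Omega>" using assms(3,4) start_in_segment[of h x0 e] by auto
  have smooth: "smooth2_on \<Omega> (dops [True] u)" "smooth2_on \<Omega> (dops [False] u)"
    using assms(2) by (simp_all only: smooth2_on_dops)
  have "smooth2_on \<Omega> g"
    unfolding g_def using smooth2_on_lincomb[OF assms(1) smooth assms(2)] by simp
  then have "dir_deriv e (N-1) g x0 = 0"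
    using assms(5) dir_deriv_eq_0_if_vanishes_on_segment[OF assms(1) _ assms(3,4)]
    by (simp add: gen_singular_line_def normal_deriv_def g_def)
  moreover have "dops w g x0 = real_linear_map A B (\<i> ^ length (filter Not w) * (\<i> * Complex (fst e) (snd e)))"
    if "length w = N - 1" for w
  proof -
    have "dops w g x0 = of_real (fst ?\<nu>) * dops (w @ [True]) u x0 + of_real (snd ?\<nu>) * dops (w @ [False]) u x0
        + C * dops w u x0"
      unfolding g_def using dops_lincomb[OF assms(1) smooth assms(2) \<open>x0 \<in> \<Omega>\<close>, of w] by (simp add: dops_append)
    also have "\<dots> = of_real (fst ?\<nu>) * real_linear_map A B (\<i> ^ length (filter Not w))
        + of_real (snd ?\<nu>) * real_linear_map A B (\<i> ^ length (filter Not w) * \<i>)"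
      using that \<open>N > 0\<close> by (simp add: top lower mult.commute)
    also have "\<dots> = real_linear_map A B (\<i> ^ length (filter Not w) * Complex (fst ?\<nu>) (snd ?\<nu>))"
    proof -
      have "\<i> ^ length (filter Not w) * Complex (fst ?\<nu>) (snd ?\<nu>)
          = of_real (fst ?\<nu>) * \<i> ^ length (filter Not w) + of_real (snd ?\<nu>) * (\<i> ^ length (filter Not w) * \<i>)"
        by (simp add: Complex_eq algebra_simps)
      then show ?thesis by (simp add: real_linear_map_add real_linear_map_of_real_mult)
    qed
    finally show ?thesis by (simp add: Complex_rot90)
  qed
  then have "dir_deriv e (N-1) g x0 = real_linear_map A B (Complex (fst e) (snd e) ^ (N-1) * (\<i> * Complex (fst e) (snd e)))"
    unfolding dir_deriv_def sum_dir_coeff_real_linear_map[symmetric] by (intro sum.cong) (simp_all add: words_def)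
  moreover have "Complex (fst e) (snd e) ^ (N-1) * (\<i> * Complex (fst e) (snd e)) = \<i> * Complex (fst e) (snd e) ^ N"
    using \<open>N > 0\<close> by (cases N) (simp_all add: ac_simps)
  ultimately show ?thesis by metis
qed

lemma derivatives_vanish_at_corner:
  assumes "open \<Omega>" "smooth2_on \<Omega> u" "\<forall>q\<in>\<Omega>. - laplacian u q = of_real lam * u q" "h > 0"
    and "em \<noteq> 0" "ep = rotate \<theta> em" "\<And>N. cos (real N * \<theta>) \<noteq> 0"
    and "segment_from x0 em h \<subseteq> \<Omega>" "segment_from x0 ep h \<subseteq> \<Omega>"
    and "gen_singular_line u (segment_from x0 em h) (rot90 em) (\<lambda>_. C)"
    and "\<forall>p\<in>segment_from x0 ep h. u p = 0"
  shows "dops w u x0 = 0"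
proof -
  let ?zm = "Complex (fst em) (snd em)"
  have "x0 \<in> \<Omega>" using assms(4,8) start_in_segment[of h x0 em] by auto
  have "?zm \<noteq> 0" using assms(5) by (simp add: complex_eq_iff prod_eq_iff)
  have "\<forall>w. length w = N \<longrightarrow> dops w u x0 = 0" for N
  proof (induction N rule: less_induct)
    case (less N)
    then have lower: "\<And>w. length w < N \<Longrightarrow> dops w u x0 = 0" by blast
    define A where "A = mixed_deriv u N 0 x0"
    define B where "B = mixed_deriv u (N-1) 1 x0"
    have top: "\<And>w. length w = N \<Longrightarrow> dops w u x0 = real_linear_map A B (\<i> ^ length (filter Not w))"
      unfolding A_def B_def using helmholtz_top_order_derivatives[OF assms(1-3) \<open>x0 \<in> \<Omega>\<close> lower] by blast
    have "Complex (fst ep) (snd ep) ^ N = cis (real N * \<theta>) * ?zm ^ N"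
      by (simp only: assms(6) Complex_rotate power_mult_distrib Complex.DeMoivre)
    then have nodal: "real_linear_map A B (cis (real N * \<theta>) * ?zm ^ N) = 0"
      using nodal_line_top_order[OF assms(1,2,4,9,11), where N = N and A = A and B = B] top by simp
    show ?case
    proof (cases "N = 0")
      case True
      then show ?thesis using nodal top by simp
    next
      case False
      have "real_linear_map A B (\<i> * ?zm ^ N) = 0"
        using singular_line_top_order[OF assms(1,2,4,8,10) _ lower top] False by simp
      then have "A = 0 \<and> B = 0"
        using real_linear_map_coeffs_eq_0[OF _ _ nodal assms(7)] \<open>?zm \<noteq> 0\<close> by simp
      then show ?thesis using top by (simp add: real_linear_map_def)
    qed
  qed
  then show ?thesis by blast
qed

lemma Vani_eq_infinity_if_dops_vanish:
  assumes "\<And>w. dops w u x0 = 0"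
  shows "Vani u x0 = \<infinity>"
proof -
  have "taylor_hterm u x0 N = (\<lambda>_. 0)" for N
    using assms by (simp add: taylor_hterm_def case_prod_beta')
  then show ?thesis by (simp add: Vani_def)
qed

theorem theorem4p2:
  fixes \<Omega> :: "(real \<times> real) set" and u :: "real \<times> real \<Rightarrow> complex"
    and lam h \<alpha> :: real and x0 em ep :: "real \<times> real" and C1 :: complex
  assumes "open \<Omega>" and "lam > 0"
    and "smooth2_on \<Omega> u"
    and "(\<lambda>x. (cmod (u x))\<^sup>2) integrable_on \<Omega>"
    and "\<forall>p\<in>\<Omega>. - laplacian u p = of_real lam * u p"
    and "x0 \<in> \<Omega>" and "h > 0"
    and "norm em = 1"
    and "0 < \<alpha>" and "\<alpha> < 2" and "\<alpha> \<notin> \<rat>"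
    and "ep = rotate (\<alpha> * pi) em"
    and "segment_from x0 em h \<subseteq> \<Omega>" and "segment_from x0 ep h \<subseteq> \<Omega>"
    and "C1 \<noteq> 0"
    and "gen_singular_line u (segment_from x0 em h) (rot90 em) (\<lambda>_. C1)"
    and "\<forall>p\<in>segment_from x0 ep h. u p = 0"
  shows "Vani u x0 = \<infinity>"
proof (rule Vani_eq_infinity_if_dops_vanish)
  have "em \<noteq> 0" using \<open>norm em = 1\<close> by auto
  with assms show "dops w u x0 = 0" for w
    by (intro derivatives_vanish_at_corner[where \<theta> = "\<alpha> * pi"] cos_irrational_multiple_pi_ne_0)
qed

end
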